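(* Let $n\ge1$, $0=b_0<b_1<\dots<b_n<b_{n+1}=1$, $h_i=b_{i+1}-b_i$ ($i=0,\dots,n$), $h_{\min}=\min_{0\le i\le n}h_i$, $\tilde h_i=\min\{h_{i-1},h_i\}$ ($i=1,\dots,n$). Let $w\in C(I)$, $I=(0,1)$, with $0\le w_0\le w(x)$ for all $x\in I$. Then for all $\boldsymbol\alpha=(\alpha_0,\dots,\alpha_n)^T\in\mathbb{R}^{n+1}$, $\boldsymbol\beta=(\beta_1,\dots,\beta_n)^T\in\mathbb{R}^n$: $$(\boldsymbol\alpha^T,\boldsymbol\beta^T)\,\mathbb{H}_\Sigma(w)\begin{pmatrix}\boldsymbol\alpha\\ \boldsymbol\beta\end{pmatrix}\ \ge\ \frac{w_0h_{\min}^3}{96}|\boldsymbol\alpha|^2+\frac{w_0}{24}\sum_{i=1}^n\tilde h_i\beta_i^2,$$ and, if $w_0>0$, then for every $\tau\in(0,1]$, $$(\boldsymbol\alpha^T,\boldsymbol\beta^T)\,\mathbb{H}_\Lambda(w)\begin{pmatrix}\boldsymbol\alpha\\ \boldsymbol\beta\end{pmatrix}\ \ge\ \frac{w_0(1-\tau)h_{\min}}{4}|\boldsymbol\alpha|^2-\frac{1}{2\tau w_0}\sum_{i=1}^n w(b_i)^2\big(h_{i-1}^{-1}+h_i^{-1}\big)\beta_i^2,$$ where $|\boldsymbol\alpha|$ is the Euclidean norm.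
   Context: $\sigma(t)=\max\{0,t\}$; $H(t)=1$ for $t>0$, $H(0)=1/2$, $H(t)=0$ for $t<0$. Set $\sigma_i(x)=\sigma(x-b_i)$, $H_i(x)=H(x-b_i)$. $\mathbb{H}_\Sigma(w)$ is the symmetric $(2n+1)\times(2n+1)$ matrix with blocks: upper-left $(\int_0^1 w\,\sigma_i\sigma_j\,dx)_{i,j=0}^n$, upper-right $(-\int_0^1 w\,\sigma_iH_j\,dx)_{i=0..n,\,j=1..n}$, lower-left its transpose, lower-right $(\int_0^1 w\,H_iH_j\,dx)_{i,j=1}^n$. $\mathbb{H}_\Lambda(w)$ is the symmetric $(2n+1)\times(2n+1)$ matrix with blocks: upper-left $(\int_0^1 w\,H_iH_j\,dx)_{i,j=0}^n$, upper-right $K=(K_{ij})_{i=0..n,\,j=1..n}$ with $K_{ij}=-w(b_j)H(b_j-b_i)$ (i.e. the formal integral $-\int_0^1 w(x)H_i(x)\delta(x-b_j)dx$), lower-left $K^T$, lower-right the zero $n\times n$ matrix. *)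

theory Defs
  imports "HOL-Analysis.Analysis"
begin

definition relu :: "real \<Rightarrow> real" where
  "relu t = max 0 t"

definition heav :: "real \<Rightarrow> real" where
  "heav t = (if t > 0 then 1 else if t = 0 then 1/2 else 0)"

definition HSigma_form ::
  "(real \<Rightarrow> real) \<Rightarrow> (nat \<Rightarrow> real) \<Rightarrow> nat \<Rightarrow> (nat \<Rightarrow> real) \<Rightarrow> (nat \<Rightarrow> real) \<Rightarrow> real" where
  "HSigma_form w b n \<alpha> \<beta> =
     (\<Sum>i=0..n. \<Sum>j=0..n. \<alpha> i * integral {0..1} (\<lambda>x. w x * relu (x - b i) * relu (x - b j)) * \<alpha> j)
   + (\<Sum>i=0..n. \<Sum>j=1..n. \<alpha> i * (- integral {0..1} (\<lambda>x. w x * relu (x - b i) * heav (x - b j))) * \<beta> j)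
   + (\<Sum>i=1..n. \<Sum>j=0..n. \<beta> i * (- integral {0..1} (\<lambda>x. w x * relu (x - b j) * heav (x - b i))) * \<alpha> j)
   + (\<Sum>i=1..n. \<Sum>j=1..n. \<beta> i * integral {0..1} (\<lambda>x. w x * heav (x - b i) * heav (x - b j)) * \<beta> j)"

definition HLambda_form ::
  "(real \<Rightarrow> real) \<Rightarrow> (nat \<Rightarrow> real) \<Rightarrow> nat \<Rightarrow> (nat \<Rightarrow> real) \<Rightarrow> (nat \<Rightarrow> real) \<Rightarrow> real" where
  "HLambda_form w b n \<alpha> \<beta> =
     (\<Sum>i=0..n. \<Sum>j=0..n. \<alpha> i * integral {0..1} (\<lambda>x. w x * heav (x - b i) * heav (x - b j)) * \<alpha> j)
   + (\<Sum>i=0..n. \<Sum>j=1..n. \<alpha> i * (- w (b j) * heav (b j - b i)) * \<beta> j)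
   + (\<Sum>i=1..n. \<Sum>j=0..n. \<beta> i * (- w (b i) * heav (b i - b j)) * \<alpha> j)"

end

theory Submission
  imports Defs
begin

(* Write u = sum_i alpha_i sigma_i - sum_j beta_j H_j.  Up to the sign of beta, H_Sigma(w) is the
   Gram matrix of sigma_0, ..., sigma_n, H_1, ..., H_n in L^2(w), so the quadratic form equals the
   integral of w u^2, which is at least w0 times the integral of u^2.  On each [b_k, b_(k+1)] the
   function u is affine with slope s_k = alpha_0 + ... + alpha_k, and at b_k it jumps by -beta_k.
   The exact integral of the square of an affine function controls both its slope and its endpoint
   values; the slopes give |alpha|^2 because alpha_k = s_k - s_(k-1), and the endpoint values give
   the jumps.  In H_Lambda(w) the upper-left block is the Gram form of the step function
   V = sum_i alpha_i H_i, equal to c_k = alpha_0 + ... + alpha_k on the k-th piece, and the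
   off-diagonal blocks evaluate V at the knots, where H(0) = 1/2 yields (c_(k-1) + c_k)/2;
   Young's inequality absorbs these cross terms into a fraction tau of the w0-weighted integral
   of V^2. *)

lemma absolutely_integrable_on_Icc_if_nonneg:
  fixes w :: "real \<Rightarrow> real"
  assumes "w integrable_on {a..b}" "\<And>x. x \<in> {a<..<b} \<Longrightarrow> 0 \<le> w x"
  shows "w absolutely_integrable_on {a..b}"
  using assms unfolding absolutely_integrable_on_Icc_iff_Ioo integrable_on_Icc_iff_Ioo
  by (intro nonnegative_absolutely_integrable_1) auto

lemma integrable_mult_mono:
  fixes W g :: "real \<Rightarrow> real"
  assumes "W absolutely_integrable_on {a..b}" "mono g"
  shows "(\<lambda>x. W x * g x) integrable_on {a..b}"
proof -
  have "g \<in> borel_measurable borel"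
    using \<open>mono g\<close> by (rule borel_measurable_mono)
  then have "g \<in> borel_measurable (lebesgue_on {a..b})"
    by (simp add: measurable_completion measurable_restrict_space1)
  moreover have "bounded (g ` {a..b})"
    using \<open>mono g\<close> by (intro bounded_subset[OF bounded_closed_interval, of _ "g a" "g b"])
      (auto simp: monoD)
  ultimately have "(\<lambda>x. g x * W x) absolutely_integrable_on {a..b}"
    using assms(1) by (intro absolutely_integrable_bounded_measurable_product_real) auto
  then show ?thesis
    by (simp add: absolutely_integrable_on_def mult.commute)
qed

lemma integral_weighted_ge:
  fixes w g :: "real \<Rightarrow> real"
  assumes "(\<lambda>x. w x * g x) integrable_on {a..b}" "g integrable_on {a..b}"
    and "\<And>x. x \<in> {a<..<b} \<Longrightarrow> c \<le> w x" "\<And>x. 0 \<le> g x"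
  shows "c * integral {a..b} g \<le> integral {a..b} (\<lambda>x. w x * g x)"
proof -
  have "integral {a<..<b} (\<lambda>x. c * g x) \<le> integral {a<..<b} (\<lambda>x. w x * g x)"
    using assms by (intro integral_le integrable_on_cmult_left[of g _ c, simplified])
      (auto simp: integrable_on_Icc_iff_Ioo intro: mult_right_mono)
  then show ?thesis
    by (simp add: integral_open_interval_real)
qed

lemma has_integral_gram_form:
  fixes W :: "'a::euclidean_space \<Rightarrow> real" and f :: "'i \<Rightarrow> 'a \<Rightarrow> real"
  assumes "finite I" "\<And>i j. i \<in> I \<Longrightarrow> j \<in> I \<Longrightarrow> (\<lambda>x. W x * (f i x * f j x)) integrable_on S"
  shows "((\<lambda>x. W x * (\<Sum>i\<in>I. a i * f i x)\<^sup>2) has_integral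
           (\<Sum>i\<in>I. \<Sum>j\<in>I. a i * integral S (\<lambda>x. W x * (f i x * f j x)) * a j)) S"
proof -
  have expand: "W x * (\<Sum>i\<in>I. a i * f i x)\<^sup>2 = (\<Sum>i\<in>I. \<Sum>j\<in>I. a i * (W x * (f i x * f j x)) * a j)" for x
    by (simp add: power2_eq_square sum_product sum_distrib_left mult_ac)
  have "((\<lambda>x. \<Sum>i\<in>I. \<Sum>j\<in>I. a i * (W x * (f i x * f j x)) * a j) has_integral
           (\<Sum>i\<in>I. \<Sum>j\<in>I. a i * integral S (\<lambda>x. W x * (f i x * f j x)) * a j)) S"
    using assms
    by (intro has_integral_sum has_integral_mult_left has_integral_mult_right integrable_integral) auto
  then show ?thesis
    by (simp only: expand)
qed

lemma has_integral_affine_square: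
  fixes c d L s :: real
  assumes "c \<le> d"
  shows "((\<lambda>x. (L + s * (x - c))\<^sup>2) has_integral
           (d - c) * (L\<^sup>2 + L * s * (d - c) + s\<^sup>2 * (d - c)\<^sup>2 / 3)) {c..d}"
proof -
  define F where "F x = L\<^sup>2 * (x - c) + L * s * (x - c)\<^sup>2 + s\<^sup>2 * (x - c) ^ 3 / 3" for x
  have "(F has_real_derivative (L + s * (x - c))\<^sup>2) (at x within {c..d})" for x
    unfolding F_def by (auto intro!: derivative_eq_intros simp: field_simps power2_eq_square)
  then have "((\<lambda>x. (L + s * (x - c))\<^sup>2) has_integral (F d - F c)) {c..d}"
    using assms by (intro fundamental_theorem_of_calculus)
      (auto simp: has_real_derivative_iff_has_vector_derivative)
  moreover have "F d - F c = (d - c) * (L\<^sup>2 + L * s * (d - c) + s\<^sup>2 * (d - c)\<^sup>2 / 3)"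
    unfolding F_def by (simp add: field_simps power2_eq_square power3_eq_cube)
  ultimately show ?thesis by simp
qed

lemma integral_split_at_points:
  fixes b :: "nat \<Rightarrow> real" and f :: "real \<Rightarrow> real"
  assumes "\<And>i. i < N \<Longrightarrow> b i \<le> b (Suc i)" "f integrable_on {b 0..b N}"
  shows "integral {b 0..b N} f = (\<Sum>k<N. integral {b k..b (Suc k)} f)"
  using assms
proof (induction N)
  case (Suc N)
  have "b 0 \<le> b N" "b N \<le> b (Suc N)"
    using Suc.prems(1) lift_Suc_mono_le_ivl[of "{..<N}" b 0 N] by fastforce+
  moreover have "f integrable_on {b 0..b N}"
    using Suc.prems(2) by (rule integrable_subinterval_real) (use \<open>b N \<le> b (Suc N)\<close> in auto)
  ultimately show ?case
    using Suc Henstock_Kurzweil_Integration.integral_combine[of "b 0" "b N" "b (Suc N)" f]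
    by simp
qed simp

lemma absolutely_integrable_one: "(\<lambda>_. 1::real) absolutely_integrable_on {a..b::real}"
  by (intro absolutely_integrable_on_Icc_if_nonneg integrable_const_ivl) auto

section \<open>Discrete inequalities\<close>

lemma sum_squares_le_partial_sums:
  fixes \<alpha> :: "nat \<Rightarrow> real"
  shows "(\<Sum>k=0..n. (\<alpha> k)\<^sup>2) \<le> 4 * (\<Sum>k=0..n. (\<Sum>i=0..k. \<alpha> i)\<^sup>2)"
proof -
  \<comment> \<open>The extra term \<open>2 (\<alpha>\<^sub>0 + ... + \<alpha>\<^sub>n)\<^sup>2\<close> makes the induction go through.\<close>
  have "(\<Sum>k=0..n. (\<alpha> k)\<^sup>2) + 2 * (\<Sum>i=0..n. \<alpha> i)\<^sup>2 \<le> 4 * (\<Sum>k=0..n. (\<Sum>i=0..k. \<alpha> i)\<^sup>2)"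
  proof (induction n)
    case (Suc n)
    have "0 \<le> (2 * (\<Sum>i=0..n. \<alpha> i) + \<alpha> (Suc n))\<^sup>2"
      by simp
    then show ?case
      using Suc.IH by (simp add: power2_eq_square algebra_simps)
  qed simp
  then show ?thesis
    using zero_le_power2[of "\<Sum>i=0..n. \<alpha> i"] by linarith
qed

lemma sum_shifted_le:
  fixes A B :: "nat \<Rightarrow> real"
  assumes "\<And>k. k \<le> n \<Longrightarrow> 0 \<le> A k" "\<And>k. k \<le> n \<Longrightarrow> 0 \<le> B k"
  shows "(\<Sum>i=1..n. A (i - 1) + B i) \<le> (\<Sum>k=0..n. A k + B k)"
proof -
  have "(\<Sum>i=1..n. A (i - 1)) = (\<Sum>k<n. A k)"
    by (simp add: sum.atLeast1_atMost_eq)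
  also have "\<dots> \<le> (\<Sum>k=0..n. A k)"
    using assms(1) by (intro sum_mono2) auto
  finally have "(\<Sum>i=1..n. A (i - 1)) \<le> (\<Sum>k=0..n. A k)" .
  moreover have "(\<Sum>i=1..n. B i) \<le> (\<Sum>k=0..n. B k)"
    using assms(2) by (intro sum_mono2) auto
  ultimately show ?thesis
    by (simp add: sum.distrib)
qed

lemma mult_le_young:
  fixes a x y :: real
  assumes "0 < a"
  shows "x * y \<le> a * x\<^sup>2 / 2 + y\<^sup>2 / (2 * a)"
proof -
  have "0 \<le> (a * x - y)\<^sup>2"
    by simp
  then have "2 * a * (x * y) \<le> a\<^sup>2 * x\<^sup>2 + y\<^sup>2"
    by (simp add: power2_eq_square algebra_simps)
  then show ?thesis
    using assms by (simp add: field_simps power2_eq_square)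
qed

lemma affine_square_integral_ge:
  fixes h L s :: real
  assumes "0 \<le> h"
  shows "h * ((L + s * h)\<^sup>2 + L\<^sup>2) / 12 + h ^ 3 * s\<^sup>2 / 24 \<le> h * (L\<^sup>2 + L * s * h + s\<^sup>2 * h\<^sup>2 / 3)"
proof -
  have "h * (L\<^sup>2 + L * s * h + s\<^sup>2 * h\<^sup>2 / 3) - (h * ((L + s * h)\<^sup>2 + L\<^sup>2) / 12 + h ^ 3 * s\<^sup>2 / 24)
      = 5 * h * (2 * L + s * h)\<^sup>2 / 24"
    by (simp add: field_simps power2_eq_square power3_eq_cube)
  moreover have "0 \<le> 5 * h * (2 * L + s * h)\<^sup>2 / 24"
    using assms by simp
  ultimately show ?thesis
    by linarith
qed

lemma piecewise_affine_energy_ge: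
  fixes h L s \<alpha> \<beta> :: "nat \<Rightarrow> real" and m :: real
  assumes h_pos: "\<And>k. k \<le> n \<Longrightarrow> 0 < h k" and m: "0 \<le> m" "\<And>k. k \<le> n \<Longrightarrow> m \<le> h k"
    and slope: "\<And>k. k \<le> n \<Longrightarrow> s k = (\<Sum>i=0..k. \<alpha> i)"
    and jump: "\<And>k. k \<in> {1..n} \<Longrightarrow> \<beta> k = L (k - 1) + s (k - 1) * h (k - 1) - L k"
  shows "m ^ 3 / 96 * (\<Sum>i=0..n. (\<alpha> i)\<^sup>2) + 1 / 24 * (\<Sum>i=1..n. min (h (i - 1)) (h i) * (\<beta> i)\<^sup>2)
     \<le> (\<Sum>k=0..n. h k * ((L k)\<^sup>2 + L k * s k * h k + (s k)\<^sup>2 * (h k)\<^sup>2 / 3))"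
proof -
  define R where "R k = L k + s k * h k" for k
  have slope_part: "m ^ 3 / 96 * (\<Sum>i=0..n. (\<alpha> i)\<^sup>2) \<le> (\<Sum>k=0..n. (h k) ^ 3 * (s k)\<^sup>2 / 24)"
  proof -
    have "m ^ 3 / 96 * (\<Sum>i=0..n. (\<alpha> i)\<^sup>2) \<le> m ^ 3 / 96 * (4 * (\<Sum>k=0..n. (s k)\<^sup>2))"
      using m(1) sum_squares_le_partial_sums[of \<alpha> n] slope by (intro mult_left_mono) auto
    also have "\<dots> \<le> (\<Sum>k=0..n. (h k) ^ 3 * (s k)\<^sup>2 / 24)"
      unfolding sum_distrib_left
      using m by (intro sum_mono) (auto intro!: mult_right_mono power_mono)
    finally show ?thesis .
  qed
  have jump_part: "1 / 24 * (\<Sum>i=1..n. min (h (i - 1)) (h i) * (\<beta> i)\<^sup>2)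
     \<le> (\<Sum>i=1..n. h (i - 1) * (R (i - 1))\<^sup>2 / 12 + h i * (L i)\<^sup>2 / 12)"
    unfolding sum_distrib_left
  proof (rule sum_mono)
    fix i assume i: "i \<in> {1..n}"
    have "0 < h (i - 1)" "0 < h i"
      using i h_pos by auto
    have "2 * (R (i - 1))\<^sup>2 + 2 * (L i)\<^sup>2 - (\<beta> i)\<^sup>2 = (R (i - 1) + L i)\<^sup>2"
      unfolding jump[OF i] R_def by (simp add: power2_eq_square algebra_simps)
    then have "(\<beta> i)\<^sup>2 \<le> 2 * (R (i - 1))\<^sup>2 + 2 * (L i)\<^sup>2"
      by (metis diff_ge_0_iff_ge zero_le_power2)
    then have "min (h (i - 1)) (h i) * (\<beta> i)\<^sup>2 \<le> min (h (i - 1)) (h i) * (2 * (R (i - 1))\<^sup>2 + 2 * (L i)\<^sup>2)"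
      using \<open>0 < h (i - 1)\<close> \<open>0 < h i\<close> by (intro mult_left_mono) auto
    also have "\<dots> \<le> 2 * h (i - 1) * (R (i - 1))\<^sup>2 + 2 * h i * (L i)\<^sup>2"
      by (simp add: distrib_left mult_right_mono add_mono)
    finally show "1 / 24 * (min (h (i - 1)) (h i) * (\<beta> i)\<^sup>2)
        \<le> h (i - 1) * (R (i - 1))\<^sup>2 / 12 + h i * (L i)\<^sup>2 / 12"
      by simp
  qed
  also have "\<dots> \<le> (\<Sum>k=0..n. h k * (R k)\<^sup>2 / 12 + h k * (L k)\<^sup>2 / 12)"
    using h_pos by (intro sum_shifted_le divide_nonneg_pos mult_nonneg_nonneg) (auto intro: less_imp_le)
  finally have "m ^ 3 / 96 * (\<Sum>i=0..n. (\<alpha> i)\<^sup>2) + 1 / 24 * (\<Sum>i=1..n. min (h (i - 1)) (h i) * (\<beta> i)\<^sup>2)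
     \<le> (\<Sum>k=0..n. h k * ((R k)\<^sup>2 + (L k)\<^sup>2) / 12 + (h k) ^ 3 * (s k)\<^sup>2 / 24)"
    using slope_part by (simp add: sum.distrib add_divide_distrib distrib_left)
  also have "\<dots> \<le> (\<Sum>k=0..n. h k * ((L k)\<^sup>2 + L k * s k * h k + (s k)\<^sup>2 * (h k)\<^sup>2 / 3))"
    unfolding R_def using h_pos by (intro sum_mono affine_square_integral_ge) (auto intro: less_imp_le)
  finally show ?thesis .
qed

lemma step_energy_cross_terms_ge:
  fixes h c \<alpha> \<beta> v :: "nat \<Rightarrow> real" and m w0 \<tau> :: real
  assumes h_pos: "\<And>k. k \<le> n \<Longrightarrow> 0 < h k" and m: "0 \<le> m" "\<And>k. k \<le> n \<Longrightarrow> m \<le> h k"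
    and partial_sums: "\<And>k. k \<le> n \<Longrightarrow> c k = (\<Sum>i=0..k. \<alpha> i)"
    and "0 < w0" "0 < \<tau>" "\<tau> \<le> 1"
  shows "w0 * (1 - \<tau>) * m / 4 * (\<Sum>i=0..n. (\<alpha> i)\<^sup>2)
       - 1 / (2 * \<tau> * w0) * (\<Sum>i=1..n. (v i)\<^sup>2 * (1 / h (i - 1) + 1 / h i) * (\<beta> i)\<^sup>2)
     \<le> w0 * (\<Sum>k=0..n. h k * (c k)\<^sup>2) - (\<Sum>j=1..n. \<beta> j * v j * (c (j - 1) + c j))"
proof -
  define t where "t = \<tau> * w0"
  have "t > 0"
    using assms unfolding t_def by simp
  have "(\<Sum>j=1..n. \<beta> j * v j * (c (j - 1) + c j))
     \<le> (\<Sum>j=1..n. t * h (j - 1) * (c (j - 1))\<^sup>2 / 2 + t * h j * (c j)\<^sup>2 / 2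
                   + (\<beta> j * v j)\<^sup>2 * (1 / h (j - 1) + 1 / h j) / (2 * t))"
  proof (rule sum_mono)
    fix j assume j: "j \<in> {1..n}"
    then have "0 < h (j - 1)" "0 < h j"
      using h_pos by auto
    then have "0 < t * h (j - 1)" "0 < t * h j"
      using \<open>t > 0\<close> by auto
    have "(\<beta> j * v j)\<^sup>2 / (2 * (t * h (j - 1))) + (\<beta> j * v j)\<^sup>2 / (2 * (t * h j))
        = (\<beta> j * v j)\<^sup>2 * (1 / h (j - 1) + 1 / h j) / (2 * t)"
      using \<open>t > 0\<close> \<open>0 < h (j - 1)\<close> \<open>0 < h j\<close> by (simp add: field_simps)
    then show "\<beta> j * v j * (c (j - 1) + c j)
        \<le> t * h (j - 1) * (c (j - 1))\<^sup>2 / 2 + t * h j * (c j)\<^sup>2 / 2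
          + (\<beta> j * v j)\<^sup>2 * (1 / h (j - 1) + 1 / h j) / (2 * t)"
      using mult_le_young[OF \<open>0 < t * h (j - 1)\<close>, of "c (j - 1)" "\<beta> j * v j"]
        mult_le_young[OF \<open>0 < t * h j\<close>, of "c j" "\<beta> j * v j"]
      by (simp add: distrib_left mult.commute)
  qed
  also have "\<dots> \<le> t * (\<Sum>k=0..n. h k * (c k)\<^sup>2)
      + 1 / (2 * \<tau> * w0) * (\<Sum>i=1..n. (v i)\<^sup>2 * (1 / h (i - 1) + 1 / h i) * (\<beta> i)\<^sup>2)"
  proof -
    have "(\<Sum>j=1..n. t * h (j - 1) * (c (j - 1))\<^sup>2 / 2 + t * h j * (c j)\<^sup>2 / 2)
        \<le> (\<Sum>k=0..n. t * h k * (c k)\<^sup>2 / 2 + t * h k * (c k)\<^sup>2 / 2)"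
      using h_pos \<open>t > 0\<close>
      by (intro sum_shifted_le divide_nonneg_pos mult_nonneg_nonneg) (auto intro: less_imp_le)
    then show ?thesis
      unfolding t_def
      by (simp add: sum.distrib sum_distrib_left sum_divide_distrib power_mult_distrib mult_ac)
  qed
  finally have young: "(\<Sum>j=1..n. \<beta> j * v j * (c (j - 1) + c j))
      \<le> t * (\<Sum>k=0..n. h k * (c k)\<^sup>2)
        + 1 / (2 * \<tau> * w0) * (\<Sum>i=1..n. (v i)\<^sup>2 * (1 / h (i - 1) + 1 / h i) * (\<beta> i)\<^sup>2)" .
  have "w0 * (1 - \<tau>) * m / 4 * (\<Sum>i=0..n. (\<alpha> i)\<^sup>2)
      \<le> w0 * (1 - \<tau>) * m / 4 * (4 * (\<Sum>k=0..n. (c k)\<^sup>2))"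
    using assms sum_squares_le_partial_sums[of \<alpha> n] by (intro mult_left_mono) auto
  also have "\<dots> \<le> (1 - \<tau>) * w0 * (\<Sum>k=0..n. h k * (c k)\<^sup>2)"
    unfolding sum_distrib_left
    using assms by (intro sum_mono) (auto intro!: mult_left_mono mult_right_mono)
  finally show ?thesis
    using young unfolding t_def by (simp add: algebra_simps)
qed

section \<open>The spline and the step function on a partition\<close>

lemma mono_relu_shift: "mono (\<lambda>x. relu (x - c))"
  unfolding mono_def relu_def by auto

lemma mono_heav_shift: "mono (\<lambda>x. heav (x - c))"
  unfolding mono_def heav_def by auto

lemma relu_nonneg: "0 \<le> relu t"
  unfolding relu_def by simp

lemma heav_nonneg: "0 \<le> heav t"
  unfolding heav_def by simp

lemma mono_mult_nonneg:
  fixes f g :: "'a::order \<Rightarrow> 'b::linordered_semiring"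
  assumes "mono f" "mono g" "\<And>x. 0 \<le> f x" "\<And>x. 0 \<le> g x"
  shows "mono (\<lambda>x. f x * g x)"
  using assms by (auto simp: mono_def intro: mult_mono)

definition relu_heav_sum :: "(nat \<Rightarrow> real) \<Rightarrow> nat \<Rightarrow> (nat \<Rightarrow> real) \<Rightarrow> (nat \<Rightarrow> real) \<Rightarrow> real \<Rightarrow> real" where
  "relu_heav_sum b n \<alpha> \<beta> x = (\<Sum>i=0..n. \<alpha> i * relu (x - b i)) - (\<Sum>j=1..n. \<beta> j * heav (x - b j))"

definition heav_sum :: "(nat \<Rightarrow> real) \<Rightarrow> nat \<Rightarrow> (nat \<Rightarrow> real) \<Rightarrow> real \<Rightarrow> real" where
  "heav_sum b n \<alpha> x = (\<Sum>i=0..n. \<alpha> i * heav (x - b i))"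

lemma has_integral_HSigma_form:
  assumes "w absolutely_integrable_on {0..1}"
  shows "((\<lambda>x. w x * (relu_heav_sum b n \<alpha> \<beta> x)\<^sup>2) has_integral HSigma_form w b n \<alpha> \<beta>) {0..1}"
proof -
  define f :: "nat + nat \<Rightarrow> real \<Rightarrow> real"
    where "f = case_sum (\<lambda>i x. relu (x - b i)) (\<lambda>j x. heav (x - b j))"
  define a where "a = case_sum \<alpha> (\<lambda>j. - \<beta> j)"
  have "mono (f p) \<and> (\<forall>x. 0 \<le> f p x)" for p
    by (cases p) (auto simp: f_def mono_relu_shift mono_heav_shift relu_nonneg heav_nonneg)
  then have "((\<lambda>x. w x * (\<Sum>p\<in>{0..n} <+> {1..n}. a p * f p x)\<^sup>2) has_integral
      (\<Sum>p\<in>{0..n} <+> {1..n}. \<Sum>q\<in>{0..n} <+> {1..n}.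
         a p * integral {0..1} (\<lambda>x. w x * (f p x * f q x)) * a q)) {0..1}"
    by (intro has_integral_gram_form integrable_mult_mono[OF assms] mono_mult_nonneg) auto
  moreover have "(\<Sum>p\<in>{0..n} <+> {1..n}. a p * f p x) = relu_heav_sum b n \<alpha> \<beta> x" for x
    by (simp add: sum.Plus a_def f_def relu_heav_sum_def sum_negf)
  moreover have "(\<Sum>p\<in>{0..n} <+> {1..n}. \<Sum>q\<in>{0..n} <+> {1..n}.
      a p * integral {0..1} (\<lambda>x. w x * (f p x * f q x)) * a q) = HSigma_form w b n \<alpha> \<beta>"
    unfolding HSigma_form_def
    by (simp add: sum.Plus a_def f_def sum_negf sum_subtractf mult_ac)
  ultimately show ?thesis
    by simp
qed

lemma has_integral_heav_sum_square:
  assumes "w absolutely_integrable_on {0..1}"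
  shows "((\<lambda>x. w x * (heav_sum b n \<alpha> x)\<^sup>2) has_integral
      (\<Sum>i=0..n. \<Sum>j=0..n. \<alpha> i * integral {0..1} (\<lambda>x. w x * heav (x - b i) * heav (x - b j)) * \<alpha> j)) {0..1}"
  using has_integral_gram_form[of "{0..n}" w "\<lambda>i x. heav (x - b i)" "{0..1}" \<alpha>]
  by (simp add: heav_sum_def mult.assoc integrable_mult_mono[OF assms] mono_mult_nonneg
      mono_heav_shift heav_nonneg)

lemma HLambda_form_eq:
  "HLambda_form w b n \<alpha> \<beta> =
     (\<Sum>i=0..n. \<Sum>j=0..n. \<alpha> i * integral {0..1} (\<lambda>x. w x * heav (x - b i) * heav (x - b j)) * \<alpha> j)
     - 2 * (\<Sum>j=1..n. \<beta> j * w (b j) * heav_sum b n \<alpha> (b j))"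
proof -
  have "(\<Sum>i=0..n. \<Sum>j=1..n. \<alpha> i * (- w (b j) * heav (b j - b i)) * \<beta> j)
      = (\<Sum>i=1..n. \<Sum>j=0..n. \<beta> i * (- w (b i) * heav (b i - b j)) * \<alpha> j)"
    by (subst sum.swap) (simp add: mult_ac)
  then show ?thesis
    unfolding HLambda_form_def heav_sum_def by (simp add: sum_distrib_left sum_negf mult_ac)
qed

lemma integrable_relu_heav_sum_square:
  "(\<lambda>x. (relu_heav_sum b n \<alpha> \<beta> x)\<^sup>2) integrable_on {0..1}"
  using has_integral_integrable[OF has_integral_HSigma_form[OF absolutely_integrable_one]] by simp

lemma integrable_heav_sum_square:
  "(\<lambda>x. (heav_sum b n \<alpha> x)\<^sup>2) integrable_on {0..1}"
  using has_integral_integrable[OF has_integral_heav_sum_square[OF absolutely_integrable_one]] by simp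

locale knots =
  fixes n :: nat and b :: "nat \<Rightarrow> real"
  assumes first_knot: "b 0 = 0" and last_knot: "b (Suc n) = 1"
    and knots_increasing: "\<And>i. i \<le> n \<Longrightarrow> b i < b (Suc i)"
begin

definition gap :: "nat \<Rightarrow> real" where
  "gap k = b (Suc k) - b k"

lemma gap_pos: "k \<le> n \<Longrightarrow> 0 < gap k"
  unfolding gap_def using knots_increasing by simp

lemma knots_less: "i < j \<Longrightarrow> j \<le> Suc n \<Longrightarrow> b i < b j"
  using lift_Suc_mono_less_ivl[of "{..n}" b i j] knots_increasing by fastforce

lemma knots_le: "i \<le> j \<Longrightarrow> j \<le> Suc n \<Longrightarrow> b i \<le> b j"
  using knots_less by (cases "i = j") (auto intro: less_imp_le)

lemma integral_split_knots:
  fixes f :: "real \<Rightarrow> real"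
  assumes "f integrable_on {0..1}"
  shows "integral {0..1} f = (\<Sum>k=0..n. integral {b k..b (Suc k)} f)"
  using integral_split_at_points[of "Suc n" b f] assms knots_increasing
  by (simp add: first_knot last_knot atLeast0AtMost lessThan_Suc_atMost less_imp_le)

context
  fixes k :: nat and x :: real
  assumes piece: "k \<le> n" "b k < x" "x < b (Suc k)"
begin

lemma knot_below_piece: "i \<le> k \<Longrightarrow> b i < x"
  using knots_le[of i k] piece by simp

lemma knot_above_piece: "k < i \<Longrightarrow> i \<le> n \<Longrightarrow> x < b i"
  using knots_le[of "Suc k" i] piece by simp

lemma relu_on_piece: "i \<le> n \<Longrightarrow> relu (x - b i) = (if i \<le> k then x - b i else 0)"
  using knot_below_piece[of i] knot_above_piece[of i] by (cases "i \<le> k") (simp_all add: relu_def)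

lemma heav_on_piece: "i \<le> n \<Longrightarrow> heav (x - b i) = (if i \<le> k then 1 else 0)"
  using knot_below_piece[of i] knot_above_piece[of i] by (cases "i \<le> k") (simp_all add: heav_def)

lemma relu_sum_on_piece:
  "(\<Sum>i=m..n. a i * relu (x - b i)) = (\<Sum>i=m..k. a i * (x - b i))"
  by (rule sum.mono_neutral_cong_right) (use piece in \<open>auto simp: relu_on_piece\<close>)

lemma heav_sum_on_piece:
  "(\<Sum>i=m..n. a i * heav (x - b i)) = (\<Sum>i=m..k. a i)"
  by (rule sum.mono_neutral_cong_right) (use piece in \<open>auto simp: heav_on_piece\<close>)

lemma relu_heav_sum_on_piece:
  "relu_heav_sum b n \<alpha> \<beta> x
     = (\<Sum>i=0..k. \<alpha> i * (b k - b i)) - (\<Sum>j=1..k. \<beta> j) + (\<Sum>i=0..k. \<alpha> i) * (x - b k)"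
proof -
  have "(\<Sum>i=0..k. \<alpha> i * (x - b i)) = (\<Sum>i=0..k. \<alpha> i * (b k - b i) + \<alpha> i * (x - b k))"
    by (rule sum.cong) (simp_all add: algebra_simps)
  then have "(\<Sum>i=0..k. \<alpha> i * (x - b i)) = (\<Sum>i=0..k. \<alpha> i * (b k - b i)) + (\<Sum>i=0..k. \<alpha> i) * (x - b k)"
    by (simp add: sum.distrib sum_distrib_right)
  then show ?thesis
    unfolding relu_heav_sum_def relu_sum_on_piece heav_sum_on_piece by simp
qed

end

lemma heav_sum_at_knot:
  assumes "1 \<le> j" "j \<le> n"
  shows "heav_sum b n \<alpha> (b j) = ((\<Sum>i=0..j - 1. \<alpha> i) + (\<Sum>i=0..j. \<alpha> i)) / 2"
proof -
  obtain m where m: "j = Suc m"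
    using assms(1) by (cases j) auto
  have heav_knot: "heav (b j - b i) = (if i < j then 1 else if i = j then 1 / 2 else 0)"
    if "i \<le> n" for i
    using knots_less[of i j] knots_less[of j i] that assms
    by (cases i j rule: linorder_cases) (simp_all add: heav_def)
  have "heav_sum b n \<alpha> (b j) = (\<Sum>i=0..j. \<alpha> i * heav (b j - b i))"
    unfolding heav_sum_def by (rule sum.mono_neutral_right) (use assms in \<open>auto simp: heav_knot\<close>)
  also have "\<dots> = (\<Sum>i=0..m. \<alpha> i * heav (b j - b i)) + \<alpha> j / 2"
    using assms by (simp add: m heav_def)
  also have "(\<Sum>i=0..m. \<alpha> i * heav (b j - b i)) = (\<Sum>i=0..m. \<alpha> i)"
  proof (rule sum.cong)
    fix i assume "i \<in> {0..m}"
    then have "i < j" "i \<le> n"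
      using m assms by auto
    then show "\<alpha> i * heav (b j - b i) = \<alpha> i"
      by (simp add: heav_knot)
  qed simp
  finally show ?thesis
    by (simp add: m field_simps)
qed

lemma integral_relu_heav_sum_square_ge:
  assumes "0 \<le> m" "\<And>k. k \<le> n \<Longrightarrow> m \<le> gap k"
  shows "m ^ 3 / 96 * (\<Sum>i=0..n. (\<alpha> i)\<^sup>2) + 1 / 24 * (\<Sum>i=1..n. min (gap (i - 1)) (gap i) * (\<beta> i)\<^sup>2)
     \<le> integral {0..1} (\<lambda>x. (relu_heav_sum b n \<alpha> \<beta> x)\<^sup>2)"
proof -
  \<comment> \<open>On the \<open>k\<close>-th piece the spline is affine with slope \<open>s k\<close> and right limit \<open>L k\<close> at \<open>b k\<close>.\<close>
  define s where "s k = (\<Sum>i=0..k. \<alpha> i)" for k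
  define L where "L k = (\<Sum>i=0..k. \<alpha> i * (b k - b i)) - (\<Sum>j=1..k. \<beta> j)" for k
  have piece: "integral {b k..b (Suc k)} (\<lambda>x. (relu_heav_sum b n \<alpha> \<beta> x)\<^sup>2)
      = gap k * ((L k)\<^sup>2 + L k * s k * gap k + (s k)\<^sup>2 * (gap k)\<^sup>2 / 3)" if "k \<le> n" for k
  proof -
    have "integral {b k..b (Suc k)} (\<lambda>x. (relu_heav_sum b n \<alpha> \<beta> x)\<^sup>2)
        = integral {b k..b (Suc k)} (\<lambda>x. (L k + s k * (x - b k))\<^sup>2)"
      by (rule integral_spike[of "{b k, b (Suc k)}"])
        (auto simp: relu_heav_sum_on_piece[OF that] L_def s_def)
    also have "\<dots> = gap k * ((L k)\<^sup>2 + L k * s k * gap k + (s k)\<^sup>2 * (gap k)\<^sup>2 / 3)"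
      using has_integral_affine_square[of "b k" "b (Suc k)" "L k" "s k"] knots_increasing[OF that]
      unfolding gap_def by (simp add: integral_unique)
    finally show ?thesis .
  qed
  have jump: "\<beta> k = L (k - 1) + s (k - 1) * gap (k - 1) - L k" if k: "k \<in> {1..n}" for k
  proof -
    obtain j where j: "k = Suc j"
      using k by (cases k) auto
    have "(\<Sum>i=0..j. \<alpha> i * (b (Suc j) - b i)) = (\<Sum>i=0..j. \<alpha> i * (b j - b i) + \<alpha> i * gap j)"
      by (rule sum.cong) (simp_all add: gap_def algebra_simps)
    then show ?thesis
      by (simp add: j L_def s_def sum.distrib sum_distrib_right)
  qed
  have "m ^ 3 / 96 * (\<Sum>i=0..n. (\<alpha> i)\<^sup>2) + 1 / 24 * (\<Sum>i=1..n. min (gap (i - 1)) (gap i) * (\<beta> i)\<^sup>2)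
      \<le> (\<Sum>k=0..n. gap k * ((L k)\<^sup>2 + L k * s k * gap k + (s k)\<^sup>2 * (gap k)\<^sup>2 / 3))"
    by (rule piecewise_affine_energy_ge) (use gap_pos assms jump s_def in auto)
  also have "\<dots> = integral {0..1} (\<lambda>x. (relu_heav_sum b n \<alpha> \<beta> x)\<^sup>2)"
    using integral_split_knots[OF integrable_relu_heav_sum_square] piece by simp
  finally show ?thesis .
qed

lemma integral_heav_sum_square:
  "integral {0..1} (\<lambda>x. (heav_sum b n \<alpha> x)\<^sup>2) = (\<Sum>k=0..n. gap k * (\<Sum>i=0..k. \<alpha> i)\<^sup>2)"
proof -
  have "integral {b k..b (Suc k)} (\<lambda>x. (heav_sum b n \<alpha> x)\<^sup>2) = gap k * (\<Sum>i=0..k. \<alpha> i)\<^sup>2"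
    if "k \<le> n" for k
  proof -
    have "integral {b k..b (Suc k)} (\<lambda>x. (heav_sum b n \<alpha> x)\<^sup>2)
        = integral {b k..b (Suc k)} (\<lambda>x. (\<Sum>i=0..k. \<alpha> i)\<^sup>2)"
      by (rule integral_spike[of "{b k, b (Suc k)}"])
        (auto simp: heav_sum_def heav_sum_on_piece[OF that])
    then show ?thesis
      using knots_increasing[OF that] by (simp add: gap_def)
  qed
  then show ?thesis
    using integral_split_knots[OF integrable_heav_sum_square] by simp
qed

lemma HSigma_form_ge:
  assumes "w integrable_on {0..1}" "0 \<le> w0" "\<And>x. x \<in> {0<..<1} \<Longrightarrow> w0 \<le> w x"
    and "0 \<le> m" "\<And>k. k \<le> n \<Longrightarrow> m \<le> gap k"
  shows "w0 * m ^ 3 / 96 * (\<Sum>i=0..n. (\<alpha> i)\<^sup>2) + w0 / 24 * (\<Sum>i=1..n. min (gap (i - 1)) (gap i) * (\<beta> i)\<^sup>2)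
     \<le> HSigma_form w b n \<alpha> \<beta>"
proof -
  have w_abs: "w absolutely_integrable_on {0..1}"
    using assms(1-3) by (intro absolutely_integrable_on_Icc_if_nonneg) (auto intro: order_trans)
  have "w0 * (m ^ 3 / 96 * (\<Sum>i=0..n. (\<alpha> i)\<^sup>2) + 1 / 24 * (\<Sum>i=1..n. min (gap (i - 1)) (gap i) * (\<beta> i)\<^sup>2))
      \<le> w0 * integral {0..1} (\<lambda>x. (relu_heav_sum b n \<alpha> \<beta> x)\<^sup>2)"
    using integral_relu_heav_sum_square_ge assms by (intro mult_left_mono) auto
  also have "\<dots> \<le> integral {0..1} (\<lambda>x. w x * (relu_heav_sum b n \<alpha> \<beta> x)\<^sup>2)"
    using has_integral_integrable[OF has_integral_HSigma_form[OF w_abs]] assms(3)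
    by (intro integral_weighted_ge integrable_relu_heav_sum_square) auto
  also have "\<dots> = HSigma_form w b n \<alpha> \<beta>"
    using has_integral_HSigma_form[OF w_abs] by (rule integral_unique)
  finally show ?thesis
    by (simp add: algebra_simps)
qed

lemma HLambda_form_ge:
  assumes "w integrable_on {0..1}" "0 < w0" "\<And>x. x \<in> {0<..<1} \<Longrightarrow> w0 \<le> w x"
    and "0 \<le> m" "\<And>k. k \<le> n \<Longrightarrow> m \<le> gap k" and "0 < \<tau>" "\<tau> \<le> 1"
  shows "w0 * (1 - \<tau>) * m / 4 * (\<Sum>i=0..n. (\<alpha> i)\<^sup>2)
       - 1 / (2 * \<tau> * w0) * (\<Sum>i=1..n. (w (b i))\<^sup>2 * (1 / gap (i - 1) + 1 / gap i) * (\<beta> i)\<^sup>2)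
     \<le> HLambda_form w b n \<alpha> \<beta>"
proof -
  define c where "c k = (\<Sum>i=0..k. \<alpha> i)" for k
  have w_abs: "w absolutely_integrable_on {0..1}"
    using assms(1-3) by (intro absolutely_integrable_on_Icc_if_nonneg) (auto intro: order_trans less_imp_le)
  have "w0 * (1 - \<tau>) * m / 4 * (\<Sum>i=0..n. (\<alpha> i)\<^sup>2)
       - 1 / (2 * \<tau> * w0) * (\<Sum>i=1..n. (w (b i))\<^sup>2 * (1 / gap (i - 1) + 1 / gap i) * (\<beta> i)\<^sup>2)
     \<le> w0 * (\<Sum>k=0..n. gap k * (c k)\<^sup>2) - (\<Sum>j=1..n. \<beta> j * w (b j) * (c (j - 1) + c j))"
    by (rule step_energy_cross_terms_ge) (use gap_pos assms c_def in auto)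
  also have "w0 * (\<Sum>k=0..n. gap k * (c k)\<^sup>2) \<le> integral {0..1} (\<lambda>x. w x * (heav_sum b n \<alpha> x)\<^sup>2)"
    unfolding c_def integral_heav_sum_square[symmetric]
    using has_integral_integrable[OF has_integral_heav_sum_square[OF w_abs]] assms(3)
    by (intro integral_weighted_ge integrable_heav_sum_square) auto
  also have "(\<Sum>j=1..n. \<beta> j * w (b j) * (c (j - 1) + c j))
      = 2 * (\<Sum>j=1..n. \<beta> j * w (b j) * heav_sum b n \<alpha> (b j))"
    by (simp add: sum_distrib_left c_def heav_sum_at_knot)
  also have "integral {0..1} (\<lambda>x. w x * (heav_sum b n \<alpha> x)\<^sup>2)
      - 2 * (\<Sum>j=1..n. \<beta> j * w (b j) * heav_sum b n \<alpha> (b j)) = HLambda_form w b n \<alpha> \<beta>"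
    using HLambda_form_eq integral_unique[OF has_integral_heav_sum_square[OF w_abs]] by simp
  finally show ?thesis
    by simp
qed

end

theorem lemma4p2:
  fixes n :: nat and b :: "nat \<Rightarrow> real" and w :: "real \<Rightarrow> real" and w0 :: real
    and \<alpha> \<beta> :: "nat \<Rightarrow> real"
  assumes "n \<ge> 1"
    and "b 0 = 0" and "b (n + 1) = 1"
    and "\<forall>i\<le>n. b i < b (Suc i)"
    and "continuous_on {0<..<1} w"
    and "w integrable_on {0..1}"
    and "0 \<le> w0" and "\<forall>x\<in>{0<..<1}. w0 \<le> w x"
  defines "h \<equiv> (\<lambda>i. b (i + 1) - b i)"
  defines "hmin \<equiv> Min (h ` {0..n})"
  defines "ht \<equiv> (\<lambda>i. min (h (i - 1)) (h i))"
  shows "HSigma_form w b n \<alpha> \<beta>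
           \<ge> w0 * hmin ^ 3 / 96 * (\<Sum>i=0..n. (\<alpha> i)\<^sup>2) + w0 / 24 * (\<Sum>i=1..n. ht i * (\<beta> i)\<^sup>2)
       \<and> (w0 > 0 \<longrightarrow> (\<forall>\<tau>\<in>{0<..1}.
           HLambda_form w b n \<alpha> \<beta>
             \<ge> w0 * (1 - \<tau>) * hmin / 4 * (\<Sum>i=0..n. (\<alpha> i)\<^sup>2)
               - 1 / (2 * \<tau> * w0) * (\<Sum>i=1..n. (w (b i))\<^sup>2 * (1 / h (i - 1) + 1 / h i) * (\<beta> i)\<^sup>2)))"
proof -
  interpret knots n b
    using assms(2-4) by unfold_locales auto
  have h_gap: "h = gap"
    unfolding h_def gap_def by simp
  have hmin_le: "hmin \<le> gap k" if "k \<le> n" for k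
    unfolding hmin_def h_gap using that by (intro Min_le) auto
  have "hmin \<in> gap ` {0..n}"
    unfolding hmin_def h_gap by (intro Min_in) auto
  then have "0 \<le> hmin"
    using gap_pos by (auto intro: less_imp_le)
  have "HLambda_form w b n \<alpha> \<beta>
      \<ge> w0 * (1 - \<tau>) * hmin / 4 * (\<Sum>i=0..n. (\<alpha> i)\<^sup>2)
        - 1 / (2 * \<tau> * w0) * (\<Sum>i=1..n. (w (b i))\<^sup>2 * (1 / gap (i - 1) + 1 / gap i) * (\<beta> i)\<^sup>2)"
    if "0 < w0" "\<tau> \<in> {0<..1}" for \<tau>
    using HLambda_form_ge[OF assms(6) that(1) assms(8)[rule_format] \<open>0 \<le> hmin\<close> hmin_le] that(2)
    by auto
  then show ?thesis
    unfolding ht_def h_gap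
    using HSigma_form_ge[OF assms(6,7) assms(8)[rule_format] \<open>0 \<le> hmin\<close> hmin_le] by auto
qed

end
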